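(* Let $X$ be a set, $r\in\{0,1\}$, $m,m'$ finite multisets with $(m',(r,m))\in\partial_X$, and let $m_1,\dots,m_k\in\mathcal M_{\mathrm{fin}}(X)$ with $m=m_1+\cdots+m_k$. Then there exist $r_1,\dots,r_k\in\{0,1\}$ and $m'_1,\dots,m'_k\in\mathcal M_{\mathrm{fin}}(\{0,1\}\times X)$ such that $r=r_1+\cdots+r_k$, $m'=m'_1+\cdots+m'_k$ and $(m'_i,(r_i,m_i))\in\partial_X$ for $i=1,\dots,k$.
   Context: $\mathcal M_{\mathrm{fin}}(A)$ denotes the set of finite multisets over a set $A$, with additive notation ($+$ is pointwise sum), and $[a_1,\dots,a_k]$ denotes the multiset with these elements counted with multiplicity. For a set $X$, $\partial_X\subseteq\mathcal M_{\mathrm{fin}}(\{0,1\}\times X)\times(\{0,1\}\times\mathcal M_{\mathrm{fin}}(X))$ (the differential of the relational model) is the set of all pairs $(m',(r,m))$ such that there exist $k\in\mathbb N$, $a_1,\dots,a_k\in X$ and $r_1,\dots,r_k\in\{0,1\}$ with $m=[a_1,\dots,a_k]$, $m'=[(r_1,a_1),\dots,(r_k,a_k)]$ and $r=r_1+\cdots+r_k\in\{0,1\}$ (ordinary integer sum, required to be $0$ or $1$). *)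

theory Defs
  imports Main "HOL-Library.Multiset"
begin

definition diffrel :: "'a set \<Rightarrow> ((nat \<times> 'a) multiset \<times> (nat \<times> 'a multiset)) set" where
  "diffrel X = {(m', (r, m)) | m' r m. \<exists>k (a :: nat \<Rightarrow> 'a) (rs :: nat \<Rightarrow> nat).
       (\<forall>i<k. a i \<in> X) \<and> (\<forall>i<k. rs i \<in> {0, 1}) \<and>
       m = (\<Sum>i<k. {# a i #}) \<and> m' = (\<Sum>i<k. {# (rs i, a i) #}) \<and>
       r = (\<Sum>i<k. rs i) \<and> r \<in> {0, 1}}"

end

theory Submission
  imports Defs
begin

text \<open>An element of \<open>diffrel X\<close> is just a multiset \<open>m'\<close> of tagged points whose tags sum to
  at most 1; the two other components are determined by \<open>m'\<close> (the untagged points and the sum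
  of the tags).  A decomposition \<open>m = m\<^sub>1 + \<dots> + m\<^sub>k\<close> of the untagged image lifts to a
  decomposition of \<open>m'\<close>, and the tag sum of each piece is bounded by the total tag sum.\<close>

lemma image_mset_sum: "image_mset f (\<Sum>i\<in>A. N i) = (\<Sum>i\<in>A. image_mset f (N i))"
  using sum_comp_morphism[of "image_mset f" N A] by (simp add: comp_def)

lemma sum_mset_sum: "sum_mset (\<Sum>i\<in>A. N i) = (\<Sum>i\<in>A. sum_mset (N i))"
  using sum_comp_morphism[of sum_mset N A] by (simp add: comp_def)

lemma ex_sum_singletons: "\<exists>(k :: nat) f. M = (\<Sum>i<k. {#f i#})"
proof (induction M)
  case empty
  show ?case by (intro exI[of _ 0]) simp
next
  case (add x M)
  then obtain k :: nat and f where M: "M = (\<Sum>i<k. {#f i#})" by blast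
  have "(\<Sum>i<k. {#(f(k := x)) i#}) = M" unfolding M by (rule sum.cong) auto
  then have "add_mset x M = (\<Sum>i<Suc k. {#(f(k := x)) i#})" by simp
  then show ?case by blast
qed

lemma image_mset_eq_sumD:
  assumes "finite A" and "image_mset f M = (\<Sum>i\<in>A. N i)"
  shows "\<exists>Ms. M = (\<Sum>i\<in>A. Ms i) \<and> (\<forall>i\<in>A. image_mset f (Ms i) = N i)"
  using assms
proof (induction A arbitrary: M rule: finite_induct)
  case empty
  then show ?case by simp
next
  case (insert x A)
  then have "image_mset f M = N x + (\<Sum>i\<in>A. N i)" by simp
  then obtain B C where M: "M = B + C" and B: "N x = image_mset f B"
    and C: "(\<Sum>i\<in>A. N i) = image_mset f C"
    using image_mset_eq_plusD by blast
  from insert.IH C obtain Ms where Ms: "C = (\<Sum>i\<in>A. Ms i)" "\<forall>i\<in>A. image_mset f (Ms i) = N i"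
    by metis
  have "(\<Sum>i\<in>A. (Ms(x := B)) i) = C" unfolding Ms(1) using insert.hyps(2) by (intro sum.cong) auto
  then have "M = (\<Sum>i\<in>insert x A. (Ms(x := B)) i)" using insert.hyps M by simp
  moreover have "\<forall>i\<in>insert x A. image_mset f ((Ms(x := B)) i) = N i" using B Ms(2) by simp
  ultimately show ?case by blast
qed

lemma mem_diffrel_iff:
  "(m', (r, m)) \<in> diffrel X \<longleftrightarrow>
     set_mset m' \<subseteq> {0, 1} \<times> X \<and> image_mset snd m' = m \<and>
     r = sum_mset (image_mset fst m') \<and> r \<in> {0, 1}"
proof
  assume "(m', (r, m)) \<in> diffrel X"
  then obtain k and a :: "nat \<Rightarrow> 'a" and rs where
    wit: "\<forall>i<k. a i \<in> X" "\<forall>i<k. rs i \<in> {0, 1}" "m = (\<Sum>i<k. {#a i#})"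
      "m' = (\<Sum>i<k. {#(rs i, a i)#})" "r = (\<Sum>i<k. rs i)" "r \<in> {0, 1}"
    unfolding diffrel_def by blast
  then show "set_mset m' \<subseteq> {0, 1} \<times> X \<and> image_mset snd m' = m \<and>
      r = sum_mset (image_mset fst m') \<and> r \<in> {0, 1}"
    by (auto simp: set_mset_sum image_mset_sum sum_mset_sum)
next
  assume *: "set_mset m' \<subseteq> {0, 1} \<times> X \<and> image_mset snd m' = m \<and>
      r = sum_mset (image_mset fst m') \<and> r \<in> {0, 1}"
  obtain k f where m': "m' = (\<Sum>i<(k :: nat). {#f i#})" using ex_sum_singletons by blast
  have "f i \<in> {0, 1} \<times> X" if "i < k" for i
    using * that by (auto simp: m' set_mset_sum)
  moreover have "m = (\<Sum>i<k. {#snd (f i)#})" "r = (\<Sum>i<k. fst (f i))"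
    using * by (simp_all add: m' image_mset_sum sum_mset_sum)
  ultimately show "(m', (r, m)) \<in> diffrel X"
    using * unfolding diffrel_def m'
    by (intro CollectI exI[of _ m'] exI[of _ r] exI[of _ m] conjI refl
        exI[of _ k] exI[of _ "snd \<circ> f"] exI[of _ "fst \<circ> f"]) (auto simp: m' mem_Times_iff)
qed

theorem mainTheorem16:
  fixes X :: "'a set" and r :: nat and m :: "'a multiset" and m' :: "(nat \<times> 'a) multiset"
    and k :: nat and ms :: "nat \<Rightarrow> 'a multiset"
  assumes "r \<in> {0, 1}"
    and "set_mset m \<subseteq> X" and "set_mset m' \<subseteq> {0, 1} \<times> X"
    and "(m', (r, m)) \<in> diffrel X"
    and "\<forall>i<k. set_mset (ms i) \<subseteq> X"
    and "m = (\<Sum>i<k. ms i)"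
  shows "\<exists>(rs :: nat \<Rightarrow> nat) (ms' :: nat \<Rightarrow> (nat \<times> 'a) multiset).
           (\<forall>i<k. rs i \<in> {0, 1}) \<and> (\<forall>i<k. set_mset (ms' i) \<subseteq> {0, 1} \<times> X) \<and>
           r = (\<Sum>i<k. rs i) \<and> m' = (\<Sum>i<k. ms' i) \<and>
           (\<forall>i<k. (ms' i, (rs i, ms i)) \<in> diffrel X)"
proof -
  from assms(4) have m': "set_mset m' \<subseteq> {0, 1} \<times> X" "image_mset snd m' = m"
    "r = sum_mset (image_mset fst m')"
    by (simp_all add: mem_diffrel_iff)
  obtain ms' where split: "m' = (\<Sum>i<k. ms' i)" "\<forall>i<k. image_mset snd (ms' i) = ms i"
    using image_mset_eq_sumD[of "{..<k}" snd m' ms] m'(2) assms(6) by auto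
  define rs where "rs i = sum_mset (image_mset fst (ms' i))" for i
  have r_sum: "r = (\<Sum>i<k. rs i)"
    unfolding m'(3) split(1) rs_def by (simp add: image_mset_sum sum_mset_sum)
  have rs_bit: "\<forall>i<k. rs i \<in> {0, 1}"
    using r_sum assms(1) member_le_sum[of _ "{..<k}" rs] by fastforce
  have ms'_set: "\<forall>i<k. set_mset (ms' i) \<subseteq> {0, 1} \<times> X"
    using m'(1) unfolding split(1) by (auto simp: set_mset_sum)
  have "\<forall>i<k. (ms' i, (rs i, ms i)) \<in> diffrel X"
    using ms'_set split(2) rs_bit by (simp add: mem_diffrel_iff rs_def)
  with rs_bit ms'_set r_sum split(1) show ?thesis by blast
qed

end
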